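(* Let $K$ be an $\mathcal R$-dioid, $m\ge2$, and let $\phi=SA^*F\in K\otimes_{\mathcal R}C_m'$, where for some $n$, $S\in\{0,1\}^{1\times n}$, $F\in\{0,1\}^{n\times 1}$ and $A=U+X+V$ with $U\in\{0,p_1,\ldots,p_{m-1}\}^{n\times n}$, $X\in K^{n\times n}$, $V\in\{0,q_1,\ldots,q_{m-1}\}^{n\times n}$ (so $p_0,q_0$ are not used). Let $S(NV)^*N(UN)^*F$ be the normal form of $\phi$, i.e. $N$ is the least solution of $y\ge(UyV+X)^*$ in $\mathrm{Mat}_{n\times n}(K\otimes_{\mathcal R}C_m')$, $N\in(Z_{C_m'}K)^{n\times n}$, and $A^*=(NV)^*N(UN)^*$. Then \[ p_0\,\phi\,q_0=SNF\in Z_{C_m'}K. \]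
   Context: An $\mathcal R$-dioid is a dioid in which every regular subset of its multiplicative monoid has a supremum $\sum A$ with $\sum(AB)=(\sum A)(\sum B)$ (equivalently a $*$-continuous Kleene algebra). An $\mathcal R$-congruence is a semiring congruence such that regular sets with equal downward closures modulo it have congruent suprema. $\Delta_m=\{p_0,\dots,p_{m-1},q_0,\dots,q_{m-1}\}$; $C_m'=\mathcal R\Delta_m^*/\rho$ where $\mathcal R\Delta_m^*$ is the algebra of regular languages over $\Delta_m$ and $\rho$ the least $\mathcal R$-congruence containing $p_iq_j=\delta_{i,j}$ ($i,j<m$). $K\otimes_{\mathcal R}C_m'$ is the tensor product of $\mathcal R$-dioids (universal $\mathcal R$-dioid with $\mathcal R$-morphisms from $K$ and $C_m'$ whose images commute elementwise); elements of $K,C_m'$ are identified with their images. $Z_{C_m'}K$ is the set of elements commuting with all of $C_m'$. Matrices carry the standard matrix Kleene algebra structure; brackets multiplied with matrices are identified with diagonal matrices. *)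

theory Defs
  imports Main
begin

class dioid = semiring_0 + monoid_mult +
  assumes add_idem: "a + a = a"

definition dle :: "'a::dioid \<Rightarrow> 'a \<Rightarrow> bool" where
  "dle a b \<longleftrightarrow> a + b = b"

definition is_lub :: "'a::dioid \<Rightarrow> 'a set \<Rightarrow> bool" where
  "is_lub s A \<longleftrightarrow> (\<forall>a\<in>A. dle a s) \<and> (\<forall>u. (\<forall>a\<in>A. dle a u) \<longrightarrow> dle s u)"

definition rsup :: "'a::dioid set \<Rightarrow> 'a" where
  "rsup A = (THE s. is_lub s A)"

definition setmult :: "'a::monoid_mult set \<Rightarrow> 'a set \<Rightarrow> 'a set" where
  "setmult A B = {a * b | a b. a \<in> A \<and> b \<in> B}"

fun setpow :: "'a::monoid_mult set \<Rightarrow> nat \<Rightarrow> 'a set" where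
  "setpow A 0 = {1}"
| "setpow A (Suc n) = setmult A (setpow A n)"

definition setstar :: "'a::monoid_mult set \<Rightarrow> 'a set" where
  "setstar A = (\<Union>n. setpow A n)"

inductive rational :: "'a::monoid_mult set \<Rightarrow> bool" where
  rat_fin: "finite A \<Longrightarrow> rational A"
| rat_un: "rational A \<Longrightarrow> rational B \<Longrightarrow> rational (A \<union> B)"
| rat_mult: "rational A \<Longrightarrow> rational B \<Longrightarrow> rational (setmult A B)"
| rat_star: "rational A \<Longrightarrow> rational (setstar A)"

definition R_dioid :: "'a::dioid itself \<Rightarrow> bool" where
  "R_dioid _ \<longleftrightarrow> (\<forall>A::'a set. rational A \<longrightarrow> (\<exists>s. is_lub s A)) \<and>
     (\<forall>A B::'a set. rational A \<longrightarrow> rational B \<longrightarrow> rsup (setmult A B) = rsup A * rsup B)"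

definition R_morphism :: "('a::dioid \<Rightarrow> 'b::dioid) \<Rightarrow> bool" where
  "R_morphism f \<longleftrightarrow> f 0 = 0 \<and> f 1 = 1 \<and> (\<forall>a b. f (a + b) = f a + f b)
     \<and> (\<forall>a b. f (a * b) = f a * f b)
     \<and> (\<forall>A. rational A \<longrightarrow> f (rsup A) = rsup (f ` A))"

text \<open>Letters of the alphabet Delta_m: P i = p_i, Q i = q_i (i < m).\<close>
datatype gen = P nat | Q nat

definition Delta :: "nat \<Rightarrow> gen set" where
  "Delta m = {P i | i. i < m} \<union> {Q i | i. i < m}"

inductive reglang :: "gen list set \<Rightarrow> bool" where
  reg_fin: "finite L \<Longrightarrow> reglang L"
| reg_un: "reglang L1 \<Longrightarrow> reglang L2 \<Longrightarrow> reglang (L1 \<union> L2)"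
| reg_conc: "reglang L1 \<Longrightarrow> reglang L2 \<Longrightarrow> reglang {u @ v | u v. u \<in> L1 \<and> v \<in> L2}"
| reg_star: "reglang L \<Longrightarrow> reglang {concat ws | ws. set ws \<subseteq> L}"

fun letterval :: "(nat \<Rightarrow> 'a) \<Rightarrow> (nat \<Rightarrow> 'a) \<Rightarrow> gen \<Rightarrow> 'a" where
  "letterval p q (P i) = p i"
| "letterval p q (Q i) = q i"

definition wordval :: "(nat \<Rightarrow> 'a::monoid_mult) \<Rightarrow> (nat \<Rightarrow> 'a) \<Rightarrow> gen list \<Rightarrow> 'a" where
  "wordval p q w = foldr (\<lambda>x y. letterval p q x * y) w 1"

text \<open>Image of C_m' = R Delta_m^* / rho under the R-morphism determined by
  p_i |-> p i, q_i |-> q i: the suprema of the word values of regular languages.\<close>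
definition Cimg :: "nat \<Rightarrow> (nat \<Rightarrow> 'a::dioid) \<Rightarrow> (nat \<Rightarrow> 'a) \<Rightarrow> 'a set" where
  "Cimg m p q = {rsup (wordval p q ` L) | L. reglang L \<and> L \<subseteq> lists (Delta m)}"

definition Cm_rel :: "nat \<Rightarrow> (nat \<Rightarrow> 'a::dioid) \<Rightarrow> (nat \<Rightarrow> 'a) \<Rightarrow> bool" where
  "Cm_rel m p q \<longleftrightarrow> (\<forall>i<m. \<forall>j<m. p i * q j = (if i = j then 1 else 0))"

text \<open>(iota, p, q) exhibits T = K tensor_R C_m': iota is the R-morphism K -> T,
  p, q are the images of the generators of C_m' (so the relations hold),
  images commute elementwise, and universality (for targets of the same
  carrier type).\<close>
definition tensor_Cm :: "nat \<Rightarrow> ('k::dioid \<Rightarrow> 't::dioid) \<Rightarrow> (nat \<Rightarrow> 't) \<Rightarrow> (nat \<Rightarrow> 't) \<Rightarrow> bool" where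
  "tensor_Cm m \<iota> p q \<longleftrightarrow>
     R_morphism \<iota> \<and> Cm_rel m p q \<and> (\<forall>k. \<forall>c\<in>Cimg m p q. \<iota> k * c = c * \<iota> k) \<and>
     (\<forall>(\<iota>'::'k \<Rightarrow> 't) p' q'. R_morphism \<iota>' \<and> Cm_rel m p' q' \<and>
         (\<forall>k. \<forall>c\<in>Cimg m p' q'. \<iota>' k * c = c * \<iota>' k) \<longrightarrow>
       (\<exists>!h. R_morphism h \<and> h \<circ> \<iota> = \<iota>' \<and> (\<forall>i<m. h (p i) = p' i \<and> h (q i) = q' i)))"

definition Zc :: "nat \<Rightarrow> (nat \<Rightarrow> 'a::dioid) \<Rightarrow> (nat \<Rightarrow> 'a) \<Rightarrow> 'a set" where
  "Zc m p q = {x. \<forall>c\<in>Cimg m p q. x * c = c * x}"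

section \<open>n x n matrices (entries with indices < n are relevant)\<close>

type_synonym 'a mat = "nat \<Rightarrow> nat \<Rightarrow> 'a"

definition mat_add :: "'a::dioid mat \<Rightarrow> 'a mat \<Rightarrow> 'a mat" where
  "mat_add A B = (\<lambda>i j. A i j + B i j)"

definition mat_mult :: "nat \<Rightarrow> 'a::dioid mat \<Rightarrow> 'a mat \<Rightarrow> 'a mat" where
  "mat_mult n A B = (\<lambda>i j. \<Sum>k<n. A i k * B k j)"

definition mat_one :: "'a::dioid mat" where
  "mat_one = (\<lambda>i j. if i = j then 1 else 0)"

fun mat_pow :: "nat \<Rightarrow> 'a::dioid mat \<Rightarrow> nat \<Rightarrow> 'a mat" where
  "mat_pow n A 0 = mat_one"
| "mat_pow n A (Suc k) = mat_mult n A (mat_pow n A k)"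

definition mat_star :: "nat \<Rightarrow> 'a::dioid mat \<Rightarrow> 'a mat" where
  "mat_star n A = (\<lambda>i j. rsup {mat_pow n A k i j | k. True})"

definition mat_le :: "nat \<Rightarrow> 'a::dioid mat \<Rightarrow> 'a mat \<Rightarrow> bool" where
  "mat_le n A B \<longleftrightarrow> (\<forall>i<n. \<forall>j<n. dle (A i j) (B i j))"

definition mat_eq :: "nat \<Rightarrow> 'a mat \<Rightarrow> 'a mat \<Rightarrow> bool" where
  "mat_eq n A B \<longleftrightarrow> (\<forall>i<n. \<forall>j<n. A i j = B i j)"

definition row_mat_col :: "nat \<Rightarrow> (nat \<Rightarrow> 'a::dioid) \<Rightarrow> 'a mat \<Rightarrow> (nat \<Rightarrow> 'a) \<Rightarrow> 'a" where
  "row_mat_col n S M F = (\<Sum>i<n. \<Sum>j<n. S i * M i j * F j)"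

definition least_sol :: "nat \<Rightarrow> 'a::dioid mat \<Rightarrow> 'a mat \<Rightarrow> 'a mat \<Rightarrow> 'a mat \<Rightarrow> bool" where
  "least_sol n U V X N \<longleftrightarrow>
     mat_le n (mat_star n (mat_add (mat_mult n (mat_mult n U N) V) X)) N \<and>
     (\<forall>Y. mat_le n (mat_star n (mat_add (mat_mult n (mat_mult n U Y) V) X)) Y \<longrightarrow> mat_le n N Y)"

end

theory Submission
  imports Defs
begin

text \<open>Since the entries of N lie in the centralizer of C_m', the element p_0 slides past every
  N, and p_0 q_j = 0 for j \<ge> 1 kills every entry of N V from the left; hence p_0 (N V)^* = p_0.
  Symmetrically (U N)^* q_0 = q_0, so p_0 A^* q_0 = p_0 (N V)^* N (U N)^* q_0 = p_0 N q_0 = N.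
  The only order-theoretic input is that in an R-dioid the entries of a matrix star are least upper
  bounds of the entries of the powers: the products along walks of the matrix graph form a
  rational set (Kleene's construction) with the same upper bounds as the powers.\<close>

lemma dle_refl: "dle (a::'a::dioid) a"
  by (simp add: dle_def add_idem)

lemma dle_trans [trans]: "dle (a::'a::dioid) b \<Longrightarrow> dle b c \<Longrightarrow> dle a c"
  unfolding dle_def by (metis add.assoc)

lemma dle_antisym: "dle (a::'a::dioid) b \<Longrightarrow> dle b a \<Longrightarrow> a = b"
  unfolding dle_def by (metis add.commute)

lemma zero_dle: "dle 0 (a::'a::dioid)"
  by (simp add: dle_def)

lemma dle_add_iff: "dle ((a::'a::dioid) + b) c \<longleftrightarrow> dle a c \<and> dle b c"
  unfolding dle_def by (metis add.commute add.left_commute add_idem)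

lemma dle_add_left: "dle (a::'a::dioid) (a + b)"
  unfolding dle_def by (metis add.assoc add_idem)

lemma dle_add_right: "dle (b::'a::dioid) (a + b)"
  unfolding dle_def by (metis add.assoc add.commute add_idem)

lemma dle_add_mono: "dle (a::'a::dioid) b \<Longrightarrow> dle c d \<Longrightarrow> dle (a + c) (b + d)"
  by (meson dle_add_iff dle_add_left dle_add_right dle_trans)

lemma dle_mult_left: "dle (a::'a::dioid) b \<Longrightarrow> dle (c * a) (c * b)"
  unfolding dle_def by (metis distrib_left)

lemma dle_mult_right: "dle (a::'a::dioid) b \<Longrightarrow> dle (a * c) (b * c)"
  unfolding dle_def by (metis distrib_right)

lemma sum_dle: "(\<And>i. i \<in> I \<Longrightarrow> dle (f i) (u::'a::dioid)) \<Longrightarrow> dle (sum f I) u"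
  by (induction I rule: infinite_finite_induct) (simp_all add: zero_dle dle_add_iff)

lemma sum_dle_mono: "(\<And>i. i \<in> I \<Longrightarrow> dle (f i) (g i::'a::dioid)) \<Longrightarrow> dle (sum f I) (sum g I)"
  by (induction I rule: infinite_finite_induct) (simp_all add: dle_refl dle_add_mono)

lemma member_dle_sum: "finite I \<Longrightarrow> i \<in> I \<Longrightarrow> dle (f i) (sum f I::'a::dioid)"
  by (metis dle_add_left sum.remove)

lemma rsup_eq: "is_lub s A \<Longrightarrow> rsup A = (s::'a::dioid)"
  unfolding rsup_def by (rule the_equality) (auto simp: is_lub_def intro: dle_antisym)

section \<open>Walks in a matrix and their rationality\<close>

fun path_prod :: "'a::dioid mat \<Rightarrow> nat \<Rightarrow> nat list \<Rightarrow> nat \<Rightarrow> 'a" where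
  "path_prod M i [] j = M i j"
| "path_prod M i (v # vs) j = M i v * path_prod M v vs j"

lemma path_prod_append: "path_prod M i (as @ r # bs) j = path_prod M i as r * path_prod M r bs j"
  by (induction as arbitrary: i) (simp_all add: mult.assoc)

definition paths_below :: "'a::dioid mat \<Rightarrow> nat \<Rightarrow> nat \<Rightarrow> nat \<Rightarrow> 'a set" where
  "paths_below M r i j = {path_prod M i vs j | vs. set vs \<subseteq> {..<r}}"

lemma paths_below_0: "paths_below M 0 i j = {M i j}"
  unfolding paths_below_def by auto

lemma paths_below_mono: "paths_below M r i j \<subseteq> paths_below M (Suc r) i j"
  unfolding paths_below_def by fastforce

lemma subset_lessThan_SucD: "set vs \<subseteq> {..<Suc r} \<Longrightarrow> r \<notin> set vs \<Longrightarrow> set vs \<subseteq> {..<r}"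
  using less_Suc_eq by auto

lemma one_in_setstar: "1 \<in> setstar A"
  unfolding setstar_def by (auto intro: exI[of _ 0])

lemma mult_in_setstar: "a \<in> A \<Longrightarrow> x \<in> setstar A \<Longrightarrow> a * x \<in> setstar A"
  unfolding setstar_def by (fastforce simp: setmult_def intro: exI[of _ "Suc _"])

text \<open>Cutting a path from r at each of its visits to r.\<close>
lemma path_prod_from_pivot:
  assumes "set bs \<subseteq> {..<Suc r}"
  shows "path_prod M r bs j \<in>
    setmult (setstar (paths_below M r r r)) (paths_below M r r j)"
  using assms
proof (induction "length bs" arbitrary: bs rule: less_induct)
  case less
  show ?case
  proof (cases "r \<in> set bs")
    case False
    then have "path_prod M r bs j \<in> paths_below M r r j"
      using less.prems subset_lessThan_SucD unfolding paths_below_def by blast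
    then show ?thesis unfolding setmult_def using one_in_setstar by force
  next
    case True
    then obtain cs ds where bs: "bs = cs @ r # ds" and "r \<notin> set cs"
      by (meson split_list_first)
    then have "path_prod M r cs r \<in> paths_below M r r r"
      using less.prems subset_lessThan_SucD unfolding paths_below_def by auto
    moreover have "path_prod M r ds j \<in>
        setmult (setstar (paths_below M r r r)) (paths_below M r r j)"
      using less.hyps less.prems bs by auto
    ultimately show ?thesis
      using bs unfolding setmult_def
      by (simp add: path_prod_append) (metis mult.assoc mult_in_setstar)
  qed
qed

lemma setpow_loops_mult_path:
  assumes "x \<in> setpow (paths_below M r r r) k" and "y \<in> paths_below M (Suc r) r j"
  shows "x * y \<in> paths_below M (Suc r) r j"
  using assms
proof (induction k arbitrary: x)
  case 0
  then show ?case by simp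
next
  case (Suc k)
  then obtain c x' where cx: "x = c * x'" "c \<in> paths_below M r r r"
      "x' \<in> setpow (paths_below M r r r) k"
    by (auto simp: setmult_def)
  obtain ds where ds: "x' * y = path_prod M r ds j" "set ds \<subseteq> {..<Suc r}"
    using Suc cx unfolding paths_below_def by blast
  obtain cs where cs: "c = path_prod M r cs r" "set cs \<subseteq> {..<r}"
    using cx unfolding paths_below_def by blast
  have "x * y = path_prod M r (cs @ r # ds) j"
    using cx cs ds by (simp add: path_prod_append mult.assoc)
  moreover have "set (cs @ r # ds) \<subseteq> {..<Suc r}"
    using cs ds by auto
  ultimately show ?case unfolding paths_below_def by blast
qed

lemma paths_below_Suc:
  "paths_below M (Suc r) i j = paths_below M r i j \<union>
     setmult (paths_below M r i r) (setmult (setstar (paths_below M r r r)) (paths_below M r r j))"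
  (is "?lhs = _ \<union> setmult _ ?tail")
proof (intro equalityI subsetI)
  fix w assume "w \<in> ?lhs"
  then obtain vs where vs: "w = path_prod M i vs j" "set vs \<subseteq> {..<Suc r}"
    unfolding paths_below_def by blast
  show "w \<in> paths_below M r i j \<union> setmult (paths_below M r i r) ?tail"
  proof (cases "r \<in> set vs")
    case False
    then show ?thesis using vs subset_lessThan_SucD unfolding paths_below_def by blast
  next
    case True
    then obtain as bs where ab: "vs = as @ r # bs" and "r \<notin> set as"
      by (meson split_list_first)
    then have "path_prod M i as r \<in> paths_below M r i r"
      using vs subset_lessThan_SucD unfolding paths_below_def by auto
    moreover have "path_prod M r bs j \<in> ?tail"
      using vs ab by (intro path_prod_from_pivot) auto
    ultimately show ?thesis using vs ab by (auto simp: path_prod_append setmult_def)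
  qed
next
  fix w assume "w \<in> paths_below M r i j \<union> setmult (paths_below M r i r) ?tail"
  then consider "w \<in> paths_below M r i j"
    | a x y where "w = a * (x * y)" "a \<in> paths_below M r i r"
        "x \<in> setstar (paths_below M r r r)" "y \<in> paths_below M r r j"
    unfolding setmult_def by blast
  then show "w \<in> ?lhs"
  proof cases
    case 1
    then show ?thesis using paths_below_mono by blast
  next
    case 2
    then have "x * y \<in> paths_below M (Suc r) r j"
      using setpow_loops_mult_path paths_below_mono unfolding setstar_def by blast
    then obtain ds where ds: "x * y = path_prod M r ds j" "set ds \<subseteq> {..<Suc r}"
      unfolding paths_below_def by blast
    obtain as where as: "a = path_prod M i as r" "set as \<subseteq> {..<r}"
      using 2 unfolding paths_below_def by blast
    have "w = path_prod M i (as @ r # ds) j" "set (as @ r # ds) \<subseteq> {..<Suc r}"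
      using 2 ds as by (auto simp: path_prod_append)
    then show ?thesis unfolding paths_below_def by blast
  qed
qed

lemma rational_paths_below: "rational (paths_below M r i j)"
  by (induction r arbitrary: i j) (simp_all add: paths_below_0 paths_below_Suc rat_fin rat_un rat_mult rat_star)

definition walk_prods :: "'a::dioid mat \<Rightarrow> nat \<Rightarrow> nat \<Rightarrow> nat \<Rightarrow> 'a set" where
  "walk_prods M n i j = paths_below M n i j \<union> (if i = j then {1} else {})"

lemma rational_walk_prods: "rational (walk_prods M n i j)"
  unfolding walk_prods_def by (intro rat_un rational_paths_below rat_fin) simp

lemma walk_prods_Cons: "w \<in> walk_prods M n l j \<Longrightarrow> l < n \<Longrightarrow> M i l * w \<in> walk_prods M n i j"
proof (cases "w \<in> paths_below M n l j")
  case True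
  assume "l < n"
  with True obtain vs where "M i l * w = path_prod M i (l # vs) j" "set (l # vs) \<subseteq> {..<n}"
    unfolding paths_below_def by auto
  then show ?thesis unfolding walk_prods_def paths_below_def by blast
next
  case False
  assume "w \<in> walk_prods M n l j"
  with False have "M i l * w = path_prod M i [] j"
    unfolding walk_prods_def by (auto split: if_splits)
  then show ?thesis unfolding walk_prods_def paths_below_def by fastforce
qed

section \<open>Matrix star in an R-dioid\<close>

lemma mult_mat_pow_dle:
  assumes "\<forall>w \<in> walk_prods M n i j. dle (c * w) u"
  shows "dle (c * mat_pow n M k i j) u"
  using assms
proof (induction k arbitrary: i c)
  case 0
  then show ?case by (cases "i = j") (auto simp: mat_one_def walk_prods_def zero_dle)
next
  case (Suc k)
  have "dle ((c * M i l) * mat_pow n M k l j) u" if "l < n" for l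
  proof (rule Suc.IH, rule ballI)
    fix w assume "w \<in> walk_prods M n l j"
    then have "M i l * w \<in> walk_prods M n i j" using walk_prods_Cons that by blast
    then show "dle ((c * M i l) * w) u" using Suc.prems by (simp add: mult.assoc)
  qed
  then have "dle (\<Sum>l<n. c * (M i l * mat_pow n M k l j)) u"
    by (intro sum_dle) (simp add: mult.assoc)
  then show ?case by (simp add: mat_mult_def sum_distrib_left)
qed

lemma path_prod_dle_mat_pow:
  assumes "set vs \<subseteq> {..<n}" and "j < n"
  shows "dle (path_prod M i vs j) (mat_pow n M (Suc (length vs)) i j)"
  using assms(1)
proof (induction vs arbitrary: i)
  case Nil
  have "dle (M i j * mat_one j j) (\<Sum>l<n. M i l * mat_one l j)"
    using assms(2) by (intro member_dle_sum[where f = "\<lambda>l. M i l * mat_one l j"]) auto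
  then show ?case by (simp add: mat_mult_def mat_one_def)
next
  case (Cons v vs)
  let ?P = "mat_pow n M (Suc (length vs))"
  have "dle (M i v * path_prod M v vs j) (M i v * ?P v j)"
    using Cons by (simp add: dle_mult_left)
  also have "dle (M i v * ?P v j) (\<Sum>l<n. M i l * ?P l j)"
    using Cons.prems by (intro member_dle_sum[where f = "\<lambda>l. M i l * ?P l j"]) auto
  finally show ?case by (simp add: mat_mult_def)
qed

lemma walk_prod_dle_mat_pow:
  assumes "w \<in> walk_prods M n i j" and "j < n"
  shows "\<exists>k. dle w (mat_pow n M k i j)"
proof (cases "w \<in> paths_below M n i j")
  case True
  then show ?thesis
    using path_prod_dle_mat_pow[OF _ assms(2)] unfolding paths_below_def by blast
next
  case False
  then have "w = 1" "i = j"
    using assms(1) unfolding walk_prods_def by (auto split: if_splits)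
  then have "dle w (mat_pow n M 0 i j)" by (simp add: mat_one_def dle_refl)
  then show ?thesis by blast
qed

lemma mat_star_is_lub:
  assumes "R_dioid TYPE('a::dioid)" and "j < n"
  shows "is_lub (mat_star n (M::'a mat) i j) {mat_pow n M k i j | k. True}"
proof -
  obtain s where s: "is_lub s (walk_prods M n i j)"
    using assms(1) rational_walk_prods unfolding R_dioid_def by blast
  have "(\<forall>w \<in> walk_prods M n i j. dle w u) \<longleftrightarrow> (\<forall>k. dle (mat_pow n M k i j) u)" for u
    using mult_mat_pow_dle[of M n i j 1 u] walk_prod_dle_mat_pow[OF _ assms(2)] dle_trans
    by (metis mult_1)
  then have "is_lub s {mat_pow n M k i j | k. True}"
    using s unfolding is_lub_def by blast
  then show ?thesis unfolding mat_star_def using rsup_eq by metis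
qed

lemma mat_pow_dle_mat_star:
  "R_dioid TYPE('a::dioid) \<Longrightarrow> j < n \<Longrightarrow> dle (mat_pow n (M::'a mat) k i j) (mat_star n M i j)"
  using mat_star_is_lub[of j n M i] unfolding is_lub_def by blast

lemma mat_star_dle:
  "R_dioid TYPE('a::dioid) \<Longrightarrow> j < n \<Longrightarrow> (\<And>k. dle (mat_pow n (M::'a mat) k i j) u)
   \<Longrightarrow> dle (mat_star n M i j) u"
  using mat_star_is_lub[of j n M i] unfolding is_lub_def by blast

lemma sum_mult_mat_one: "j < n \<Longrightarrow> (\<Sum>l<n. (M::'a::dioid mat) i l * mat_one l j) = M i j"
  by (simp add: mat_one_def if_distrib[of "(*) _"] sum.delta' cong: if_cong)

lemma sum_mat_one_mult: "i < n \<Longrightarrow> (\<Sum>l<n. mat_one i l * (M::'a::dioid mat) l j) = M i j"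
  by (simp add: mat_one_def if_distrib[of "\<lambda>x. x * _"] sum.delta cong: if_cong)

lemma mat_pow_Suc':
  "i < n \<Longrightarrow> j < n \<Longrightarrow>
   mat_pow n (M::'a::dioid mat) (Suc k) i j = (\<Sum>l<n. mat_pow n M k i l * M l j)"
proof (induction k arbitrary: i)
  case 0
  then show ?case by (simp add: mat_mult_def sum_mult_mat_one sum_mat_one_mult)
next
  case (Suc k)
  have "mat_pow n M (Suc (Suc k)) i j = (\<Sum>l<n. M i l * (\<Sum>a<n. mat_pow n M k l a * M a j))"
    using Suc by (simp add: mat_mult_def)
  also have "\<dots> = (\<Sum>a<n. (\<Sum>l<n. M i l * mat_pow n M k l a) * M a j)"
    by (simp add: sum_distrib_left sum_distrib_right mult.assoc) (rule sum.swap)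
  finally show ?case by (simp add: mat_mult_def)
qed

text \<open>Both inequalities come from the unfolding M^* = 1 + M M^* (resp. 1 + M^* M):
  c M^* \<le> c (1 + M M^*) = c, and c = c M^0 \<le> c M^*.\<close>
lemma mult_mat_star_annihilated:
  assumes R: "R_dioid TYPE('a::dioid)" and "i < n" and k: "k < n"
    and c: "\<And>l. l < n \<Longrightarrow> c * (M::'a mat) i l = 0"
  shows "c * mat_star n M i k = c * mat_one i k"
proof -
  define u where "u = mat_one i k + (\<Sum>l<n. M i l * mat_star n M l k)"
  have "dle (mat_pow n M t i k) u" for t
  proof (cases t)
    case 0
    then show ?thesis by (simp add: u_def dle_add_left)
  next
    case (Suc t')
    have "dle (\<Sum>l<n. M i l * mat_pow n M t' l k) (\<Sum>l<n. M i l * mat_star n M l k)"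
      using R k by (intro sum_dle_mono dle_mult_left mat_pow_dle_mat_star)
    also have "dle \<dots> u" unfolding u_def by (rule dle_add_right)
    finally show ?thesis using Suc by (simp add: mat_mult_def)
  qed
  then have "dle (c * mat_star n M i k) (c * u)"
    using mat_star_dle R k dle_mult_left by blast
  moreover have "c * u = c * mat_one i k"
    unfolding u_def using c by (simp add: distrib_left sum_distrib_left mult.assoc[symmetric])
  moreover have "dle (c * mat_one i k) (c * mat_star n M i k)"
    using mat_pow_dle_mat_star[OF R k, of M 0 i] by (simp add: dle_mult_left)
  ultimately show ?thesis by (metis dle_antisym)
qed

lemma mat_star_mult_annihilated:
  assumes R: "R_dioid TYPE('a::dioid)" and i: "i < n" and k: "k < n"
    and d: "\<And>l. l < n \<Longrightarrow> (M::'a mat) l k * d = 0"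
  shows "mat_star n M i k * d = mat_one i k * d"
proof -
  define u where "u = mat_one i k + (\<Sum>l<n. mat_star n M i l * M l k)"
  have "dle (mat_pow n M t i k) u" for t
  proof (cases t)
    case 0
    then show ?thesis by (simp add: u_def dle_add_left)
  next
    case (Suc t')
    have "dle (\<Sum>l<n. mat_pow n M t' i l * M l k) (\<Sum>l<n. mat_star n M i l * M l k)"
      using R by (intro sum_dle_mono dle_mult_right mat_pow_dle_mat_star) auto
    also have "dle \<dots> u" unfolding u_def by (rule dle_add_right)
    finally show ?thesis using Suc mat_pow_Suc'[OF i k, of M t'] by simp
  qed
  then have "dle (mat_star n M i k * d) (u * d)"
    using mat_star_dle R k dle_mult_right by blast
  moreover have "u * d = mat_one i k * d"
    unfolding u_def using d by (simp add: distrib_right sum_distrib_right mult.assoc)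
  moreover have "dle (mat_one i k * d) (mat_star n M i k * d)"
    using mat_pow_dle_mat_star[OF R k, of M 0 i] by (simp add: dle_mult_right)
  ultimately show ?thesis by (metis dle_antisym)
qed

lemma sandwich_normal_form:
  fixes N U V :: "'a::dioid mat"
  assumes R: "R_dioid TYPE('a)" and i: "i < n" and j: "j < n"
    and cd: "c * d = 1"
    and c_N: "\<And>a b. a < n \<Longrightarrow> b < n \<Longrightarrow> c * N a b = N a b * c"
    and d_N: "\<And>a b. a < n \<Longrightarrow> b < n \<Longrightarrow> d * N a b = N a b * d"
    and c_V: "\<And>a b. a < n \<Longrightarrow> b < n \<Longrightarrow> c * V a b = 0"
    and U_d: "\<And>a b. a < n \<Longrightarrow> b < n \<Longrightarrow> U a b * d = 0"
  shows "c * mat_mult n (mat_mult n (mat_star n (mat_mult n N V)) N) (mat_star n (mat_mult n U N)) i j * d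
         = N i j"
proof -
  let ?L = "mat_star n (mat_mult n N V)" and ?R = "mat_star n (mat_mult n U N)"
  have L: "c * ?L i a = c * mat_one i a" if "a < n" for a
  proof (rule mult_mat_star_annihilated[OF R i that])
    fix l assume "l < n"
    have "c * mat_mult n N V i l = (\<Sum>b<n. N i b * (c * V b l))"
      unfolding mat_mult_def sum_distrib_left
      by (rule sum.cong) (auto simp: c_N i mult.assoc[symmetric])
    then show "c * mat_mult n N V i l = 0"
      using c_V \<open>l < n\<close> by simp
  qed
  have R: "?R b j * d = mat_one b j * d" if "b < n" for b
  proof (rule mat_star_mult_annihilated[OF R that j])
    fix l assume "l < n"
    have "mat_mult n U N l j * d = (\<Sum>a<n. (U l a * d) * N a j)"
      unfolding mat_mult_def sum_distrib_right
      by (rule sum.cong) (auto simp: d_N j mult.assoc)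
    then show "mat_mult n U N l j * d = 0"
      using U_d \<open>l < n\<close> by simp
  qed
  have "c * mat_mult n (mat_mult n ?L N) ?R i j * d
        = (\<Sum>b<n. (\<Sum>a<n. (c * ?L i a) * N a b) * (?R b j * d))"
    by (simp add: mat_mult_def sum_distrib_left sum_distrib_right mult.assoc)
  also have "\<dots> = (\<Sum>b<n. (\<Sum>a<n. (c * mat_one i a) * N a b) * (mat_one b j * d))"
    using L R by simp
  also have "\<dots> = c * (\<Sum>b<n. (\<Sum>a<n. mat_one i a * N a b) * mat_one b j) * d"
    by (simp add: sum_distrib_left sum_distrib_right mult.assoc)
  also have "\<dots> = c * N i j * d"
    using i j by (simp add: sum_mat_one_mult sum_mult_mat_one)
  also have "\<dots> = N i j"
    using c_N[OF i j] cd by (simp add: mult.assoc)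
  finally show ?thesis .
qed

lemma row_mat_col_sandwich:
  assumes "\<And>i. i < n \<Longrightarrow> c * S i = S i * c" and "\<And>j. j < n \<Longrightarrow> F j * d = d * F j"
  shows "c * row_mat_col n S M F * d = row_mat_col n S (\<lambda>i j. c * M i j * d) F"
  unfolding row_mat_col_def sum_distrib_left sum_distrib_right
proof (intro sum.cong refl)
  fix i j assume "i \<in> {..<n}" "j \<in> {..<n}"
  then have "c * S i = S i * c" "F j * d = d * F j"
    using assms by simp_all
  have "c * (S i * M i j * F j) * d = (c * S i) * M i j * (F j * d)"
    by (simp add: mult.assoc)
  also have "\<dots> = S i * (c * M i j * d) * F j"
    unfolding \<open>c * S i = S i * c\<close> \<open>F j * d = d * F j\<close> by (simp add: mult.assoc)
  finally show "c * (S i * M i j * F j) * d = S i * (c * M i j * d) * F j" .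
qed

lemma Zc_0: "0 \<in> Zc m p q" and Zc_1: "1 \<in> Zc m p q"
  unfolding Zc_def by simp_all

lemma Zc_add: "x \<in> Zc m p q \<Longrightarrow> y \<in> Zc m p q \<Longrightarrow> x + y \<in> Zc m p q"
  unfolding Zc_def by (simp add: distrib_left distrib_right)

lemma Zc_mult: "x \<in> Zc m p q \<Longrightarrow> y \<in> Zc m p q \<Longrightarrow> x * y \<in> Zc m p q"
  unfolding Zc_def by (simp add: mult.assoc) (metis mult.assoc)

lemma Zc_sum: "(\<And>i. i \<in> I \<Longrightarrow> f i \<in> Zc m p q) \<Longrightarrow> sum f I \<in> Zc m p q"
  by (induction I rule: infinite_finite_induct) (simp_all add: Zc_0 Zc_add)

lemma row_mat_col_in_Zc:
  assumes "\<forall>i<n. S i \<in> Zc m p q" "\<forall>j<n. F j \<in> Zc m p q" "\<forall>i<n. \<forall>j<n. N i j \<in> Zc m p q"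
  shows "row_mat_col n S N F \<in> Zc m p q"
  unfolding row_mat_col_def using assms by (intro Zc_sum Zc_mult) auto

lemma letterval_in_Cimg:
  assumes "g \<in> Delta m"
  shows "letterval p q g \<in> Cimg m p (q::nat \<Rightarrow> 'a::dioid)"
proof -
  have "rsup (wordval p q ` {[g]}) = letterval p q g"
    by (rule rsup_eq) (simp add: is_lub_def wordval_def dle_refl)
  moreover have "reglang {[g]}" by (rule reg_fin) simp
  ultimately show ?thesis
    using assms unfolding Cimg_def by (intro CollectI exI[of _ "{[g]}"]) simp
qed

lemma p_in_Cimg: "i < m \<Longrightarrow> p i \<in> Cimg m p q"
  using letterval_in_Cimg[of "P i" m p q] by (simp add: Delta_def)

lemma q_in_Cimg: "i < m \<Longrightarrow> q i \<in> Cimg m p q"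
  using letterval_in_Cimg[of "Q i" m p q] by (simp add: Delta_def)

lemma Cm_rel_p0_mult:
  "Cm_rel m p q \<Longrightarrow> v \<in> insert 0 (q ` {1..<m}) \<Longrightarrow> p 0 * v = 0"
  unfolding Cm_rel_def by auto

lemma Cm_rel_mult_q0:
  "Cm_rel m p q \<Longrightarrow> u \<in> insert 0 (p ` {1..<m}) \<Longrightarrow> u * q 0 = 0"
  unfolding Cm_rel_def by auto

theorem corollary5:
  fixes \<iota> :: "'k::dioid \<Rightarrow> 't::dioid" and p q :: "nat \<Rightarrow> 't" and m n :: nat
    and S F :: "nat \<Rightarrow> 't" and U X V N :: "'t mat"
  assumes RK: "R_dioid TYPE('k)" and RT: "R_dioid TYPE('t)"
    and tensor: "tensor_Cm m \<iota> p q"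
    and m2: "m \<ge> 2"
    and S01: "\<forall>j<n. S j \<in> {0, 1}"
    and F01: "\<forall>i<n. F i \<in> {0, 1}"
    and U_p: "\<forall>i<n. \<forall>j<n. U i j \<in> insert 0 (p ` {1..<m})"
    and X_K: "\<forall>i<n. \<forall>j<n. X i j \<in> range \<iota>"
    and V_q: "\<forall>i<n. \<forall>j<n. V i j \<in> insert 0 (q ` {1..<m})"
    and N_least: "least_sol n U V X N"
    and N_Z: "\<forall>i<n. \<forall>j<n. N i j \<in> Zc m p q"
    and N_nf: "mat_eq n (mat_star n (mat_add (mat_add U X) V))
                 (mat_mult n (mat_mult n (mat_star n (mat_mult n N V)) N) (mat_star n (mat_mult n U N)))"
  shows "p 0 * row_mat_col n S (mat_star n (mat_add (mat_add U X) V)) F * q 0 = row_mat_col n S N F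
         \<and> row_mat_col n S N F \<in> Zc m p q"
proof
  have Cm: "Cm_rel m p q" using tensor unfolding tensor_Cm_def by blast
  have "p 0 \<in> Cimg m p q" "q 0 \<in> Cimg m p q" using m2 by (simp_all add: p_in_Cimg q_in_Cimg)
  then have Z_comm: "p 0 * z = z * p 0" "q 0 * z = z * q 0" if "z \<in> Zc m p q" for z
    using that unfolding Zc_def by auto
  have S_Z: "\<forall>i<n. S i \<in> Zc m p q" and F_Z: "\<forall>j<n. F j \<in> Zc m p q"
    using S01 F01 Zc_0 Zc_1 by (metis empty_iff insertE)+
  have entry: "p 0 * mat_star n (mat_add (mat_add U X) V) i j * q 0 = N i j"
    if "i < n" "j < n" for i j
  proof -
    have "p 0 * mat_mult n (mat_mult n (mat_star n (mat_mult n N V)) N)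
        (mat_star n (mat_mult n U N)) i j * q 0 = N i j"
    proof (rule sandwich_normal_form[OF RT that])
      show "p 0 * q 0 = 1" using Cm m2 unfolding Cm_rel_def by auto
      show "p 0 * V a b = 0" if "a < n" "b < n" for a b
        using Cm_rel_p0_mult[OF Cm] V_q that by blast
      show "U a b * q 0 = 0" if "a < n" "b < n" for a b
        using Cm_rel_mult_q0[OF Cm] U_p that by blast
    qed (use N_Z Z_comm in blast)+
    then show ?thesis using N_nf that unfolding mat_eq_def by simp
  qed
  have "p 0 * row_mat_col n S (mat_star n (mat_add (mat_add U X) V)) F * q 0
        = row_mat_col n S (\<lambda>i j. p 0 * mat_star n (mat_add (mat_add U X) V) i j * q 0) F"
    using S_Z F_Z Z_comm by (intro row_mat_col_sandwich) (blast, metis)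
  also have "\<dots> = row_mat_col n S N F"
    unfolding row_mat_col_def using entry by simp
  finally show "p 0 * row_mat_col n S (mat_star n (mat_add (mat_add U X) V)) F * q 0
      = row_mat_col n S N F" .
  show "row_mat_col n S N F \<in> Zc m p q"
    using S_Z F_Z N_Z by (rule row_mat_col_in_Zc)
qed

end
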